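(* Let $(X,Y)$ be a pair of $n\times n$ complex matrices with $\mathrm{rank}([X,Y]-I)\le 1$, and suppose $X$ is diagonalizable. Then there are unique polynomials $p,q$ of degree at most $n$ with $p(0)=q(0)=0$ such that the pair $\Psi_q\Phi_p(X_0,Y_0)$ is simultaneously conjugate to $(X,Y)$.
   Context: $X_0=-\sum_{r=1}^{n-1} rE_{r+1,r}$, $Y_0=\sum_{r=1}^{n-1}E_{r,r+1}$ ($E_{i,j}$ the matrix unit). For a polynomial $p$, $\Phi_p(X,Y)=(X+p'(Y),Y)$ and $\Psi_q(X,Y)=(X,Y-q'(X))$. *)

theory Defs
  imports "Jordan_Normal_Form.DL_Rank" "HOL-Computational_Algebra.Polynomial"
begin

definition poly_mat :: "complex poly \<Rightarrow> complex mat \<Rightarrow> complex mat" where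
  "poly_mat p A = foldr (\<lambda>c M. c \<cdot>\<^sub>m 1\<^sub>m (dim_row A) + A * M) (coeffs p) (0\<^sub>m (dim_row A) (dim_row A))"

(* X_0 = - sum_{r=1}^{n-1} r E_{r+1,r}  (0-based indices: entry (r, r-1) = -r) *)
definition X0 :: "nat \<Rightarrow> complex mat" where
  "X0 n = mat n n (\<lambda>(i,j). if i = j + 1 then - of_nat i else 0)"

(* Y_0 = sum_{r=1}^{n-1} E_{r,r+1}  (0-based indices: entry (r-1, r) = 1) *)
definition Y0 :: "nat \<Rightarrow> complex mat" where
  "Y0 n = mat n n (\<lambda>(i,j). if j = i + 1 then 1 else 0)"

definition Phi :: "complex poly \<Rightarrow> complex mat \<times> complex mat \<Rightarrow> complex mat \<times> complex mat" where
  "Phi p XY = (fst XY + poly_mat (pderiv p) (snd XY), snd XY)"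

definition Psi :: "complex poly \<Rightarrow> complex mat \<times> complex mat \<Rightarrow> complex mat \<times> complex mat" where
  "Psi q XY = (fst XY, snd XY - poly_mat (pderiv q) (fst XY))"

definition sim_conj :: "nat \<Rightarrow> complex mat \<times> complex mat \<Rightarrow> complex mat \<times> complex mat \<Rightarrow> bool" where
  "sim_conj n AB XY = (\<exists>P Q. P \<in> carrier_mat n n \<and> Q \<in> carrier_mat n n \<and>
      P * Q = 1\<^sub>m n \<and> Q * P = 1\<^sub>m n \<and>
      fst XY = P * fst AB * Q \<and> snd XY = P * snd AB * Q)"

definition diagonalizable :: "complex mat \<Rightarrow> bool" where
  "diagonalizable A = (\<exists>D. diagonal_mat D \<and> similar_mat A D)"

end

theory Submission
  imports Defs Jordan_Normal_Form.DL_Rank_Submatrix "HOL-Computational_Algebra.Polynomial_FPS"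
begin

text \<open>
  Conjugate \<open>X\<close> to a diagonal matrix \<open>D = diag x\<close>. The rank condition makes \<open>[D, Y] - I\<close> an
  outer product \<open>a b\<^sup>T\<close>, i.e. \<open>(x i - x j) Y i j - \<delta> i j = a i b j\<close>. Hence \<open>a i b i = -1\<close>,
  the \<open>x i\<close> are pairwise distinct, and \<open>Y\<close> is determined up to conjugation by an invertible
  diagonal matrix and addition of a diagonal matrix.

  For \<open>X\<^sub>p = X0 + p'(Y0)\<close> a row vector \<open>w\<close> satisfies \<open>w X\<^sub>p = l w\<close> exactly when \<open>w\<close> is
  proportional to the first \<open>n\<close> coefficients of \<open>exp (p z - l z)\<close> and the \<open>n\<close>-th coefficient of
  this series vanishes. That coefficient is a polynomial of degree \<open>n\<close> in \<open>l\<close> whose coefficients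
  correspond triangularly to those of \<open>p\<close>, so exactly one \<open>p\<close> of degree at most \<open>n\<close> with
  \<open>p(0) = 0\<close> gives \<open>X\<^sub>p\<close> the eigenvalues \<open>x i\<close>. The eigenvectors \<open>W\<close> conjugate \<open>X\<^sub>p\<close> to \<open>D\<close>,
  and \<open>Y0 - q'(X\<^sub>p)\<close> to \<open>W Y0 W\<^sup>-\<^sup>1 - diag (q' \<circ> x)\<close>. After the diagonal rescaling this
  agrees with \<open>Y\<close> off the diagonal, and on the diagonal exactly when \<open>q'\<close> interpolates prescribed
  values at the \<open>n\<close> points \<open>x i\<close>, which determines \<open>q'\<close> of degree below \<open>n\<close> uniquely.
\<close>

section \<open>Matrices of rank at most one\<close>

lemma det_dim_2:
  fixes A :: "'a::comm_ring_1 mat"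
  assumes "A \<in> carrier_mat 2 2"
  shows "det A = A $$ (0,0) * A $$ (1,1) - A $$ (0,1) * A $$ (1,0)"
proof -
  have "mat_delete A 0 j \<in> carrier_mat 1 1" for j
    using assms by (simp add: mat_delete_def)
  then show ?thesis
    using assms by (simp add: laplace_expansion_row[OF assms, of 0] cofactor_def det_single
        numeral_2_eq_2 mat_delete_def)
qed

lemma rank_le_one_minor:
  fixes A :: "'a::field mat"
  assumes A: "A \<in> carrier_mat n m" and rank: "vec_space.rank n A \<le> 1"
    and "i < n" "k < n" "j < m" "l < m"
  shows "A $$ (i,j) * A $$ (k,l) = A $$ (i,l) * A $$ (k,j)"
proof -
  have ordered: "A $$ (i,j) * A $$ (k,l) = A $$ (i,l) * A $$ (k,j)"
    if ik: "i < k" "k < n" and jl: "j < l" "l < m" for i k j l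
  proof (rule ccontr)
    assume ne: "A $$ (i,j) * A $$ (k,l) \<noteq> A $$ (i,l) * A $$ (k,j)"
    let ?S = "submatrix A {i,k} {j,l}"
    have card: "card {a. a < n \<and> a \<in> {i,k}} = 2" "card {a. a < m \<and> a \<in> {j,l}} = 2"
    proof -
      have "{a. a < n \<and> a \<in> {i,k}} = {i,k}" "{a. a < m \<and> a \<in> {j,l}} = {j,l}"
        using that by auto
      then show "card {a. a < n \<and> a \<in> {i,k}} = 2" "card {a. a < m \<and> a \<in> {j,l}} = 2"
        using that by simp_all
    qed
    have S: "?S \<in> carrier_mat 2 2"
      using A card by (auto simp: submatrix_def)
    have "{a \<in> {i,k}. a < i} = {}" "{a \<in> {i,k}. a < k} = {i}"
      "{a \<in> {j,l}. a < j} = {}" "{a \<in> {j,l}. a < l} = {j}"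
      using ik jl by auto
    then have pos: "card {a \<in> {i,k}. a < i} = 0" "card {a \<in> {i,k}. a < k} = 1"
      "card {a \<in> {j,l}. a < j} = 0" "card {a \<in> {j,l}. a < l} = 1"
      by simp_all
    have entry: "?S $$ (card {a \<in> {i,k}. a < r}, card {a \<in> {j,l}. a < s}) = A $$ (r,s)"
      if "r \<in> {i,k}" "s \<in> {j,l}" for r s
      using submatrix_index_card[of r A s "{i,k}" "{j,l}"] A that ik jl by auto
    have "det ?S = A $$ (i,j) * A $$ (k,l) - A $$ (i,l) * A $$ (k,j)"
      using entry[of i j] entry[of i l] entry[of k j] entry[of k l]
      unfolding pos by (simp add: det_dim_2[OF S])
    with ne have "det ?S \<noteq> 0" by simp
    from vec_space.rank_gt_minor[OF A this] have "2 \<le> vec_space.rank n A"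
      using card by simp
    with rank show False by simp
  qed
  have rows: "A $$ (i,a) * A $$ (k,b) = A $$ (i,b) * A $$ (k,a)" if "a < b" "b < m" for a b
    using ordered[of i k a b] ordered[of k i a b] that \<open>i < n\<close> \<open>k < n\<close>
    by (cases i k rule: linorder_cases) (auto simp: mult.commute)
  show ?thesis
    using rows[of j l] rows[of l j] \<open>j < m\<close> \<open>l < m\<close>
    by (cases j l rule: linorder_cases) auto
qed

definition outer_mat :: "nat \<Rightarrow> (nat \<Rightarrow> 'a) \<Rightarrow> (nat \<Rightarrow> 'a) \<Rightarrow> 'a::times mat" where
  "outer_mat n u v = mat n n (\<lambda>(i,j). u i * v j)"

lemma outer_mat_dims [simp]: "dim_row (outer_mat n u v) = n" "dim_col (outer_mat n u v) = n"
  by (simp_all add: outer_mat_def)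

lemma outer_mat_index [simp]: "i < n \<Longrightarrow> j < n \<Longrightarrow> outer_mat n u v $$ (i,j) = u i * v j"
  by (simp add: outer_mat_def)

lemma rank_le_one_imp_outer_mat:
  fixes A :: "'a::field mat"
  assumes A: "A \<in> carrier_mat n n" and rank: "vec_space.rank n A \<le> 1"
  obtains u v where "A = outer_mat n u v"
proof (cases "\<forall>i<n. \<forall>j<n. A $$ (i,j) = 0")
  case True
  then have "A = outer_mat n (\<lambda>_. 0) (\<lambda>_. 0)"
    using A by (intro eq_matI) auto
  then show ?thesis by (rule that)
next
  case False
  then obtain a b where ab: "a < n" "b < n" "A $$ (a,b) \<noteq> 0" by auto
  have "A = outer_mat n (\<lambda>i. A $$ (i,b)) (\<lambda>j. A $$ (a,j) / A $$ (a,b))" (is "A = ?O")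
  proof (rule eq_matI)
    fix i j assume "i < dim_row ?O" "j < dim_col ?O"
    then have "i < n" "j < n" by simp_all
    with rank_le_one_minor[OF A rank, of i a j b] ab show "A $$ (i,j) = ?O $$ (i,j)"
      by (simp add: field_simps)
  qed (use A in auto)
  then show ?thesis by (rule that)
qed

lemma mult_outer_mat_mult:
  fixes P Q :: "'a::comm_semiring_1 mat"
  assumes P: "P \<in> carrier_mat n n" and Q: "Q \<in> carrier_mat n n"
  shows "P * outer_mat n u v * Q
    = outer_mat n (\<lambda>i. \<Sum>k<n. P $$ (i,k) * u k) (\<lambda>j. \<Sum>l<n. v l * Q $$ (l,j))"
    (is "_ = outer_mat n ?u ?v")
proof (rule eq_matI)
  fix i j assume "i < dim_row (outer_mat n ?u ?v)" "j < dim_col (outer_mat n ?u ?v)"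
  then have ij: "i < n" "j < n" by simp_all
  have PO: "(P * outer_mat n u v) $$ (i,l) = ?u i * v l" if "l < n" for l
  proof -
    have "(P * outer_mat n u v) $$ (i,l) = (\<Sum>k<n. P $$ (i,k) * (u k * v l))"
      using P ij that by (simp add: scalar_prod_def atLeast0LessThan)
    then show ?thesis
      by (simp add: sum_distrib_right mult.assoc)
  qed
  have "(P * outer_mat n u v * Q) $$ (i,j) = (\<Sum>l<n. (P * outer_mat n u v) $$ (i,l) * Q $$ (l,j))"
    using P Q ij by (simp add: scalar_prod_def atLeast0LessThan)
  also have "\<dots> = (\<Sum>l<n. ?u i * (v l * Q $$ (l,j)))"
    by (intro sum.cong) (simp_all add: PO mult.assoc)
  also have "\<dots> = ?u i * ?v j"
    by (simp add: sum_distrib_left)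
  finally show "(P * outer_mat n u v * Q) $$ (i,j) = outer_mat n ?u ?v $$ (i,j)"
    using ij by simp
qed (use P Q in simp_all)

section \<open>Simultaneous similarity\<close>

lemma mult_mat_cancel_left:
  fixes P Q X :: "'a::semiring_1 mat"
  assumes "Q * P = 1\<^sub>m n" "P \<in> carrier_mat n n" "Q \<in> carrier_mat n n" "dim_row X = n"
  shows "Q * (P * X) = X"
proof -
  have X: "X \<in> carrier_mat n (dim_col X)"
    using assms(4) by (rule carrier_matI) simp_all
  have "Q * (P * X) = (Q * P) * X"
    using assms(3,2) X by (rule assoc_mult_mat[symmetric])
  also have "\<dots> = X"
    unfolding assms(1) using X by (rule left_mult_one_mat)
  finally show ?thesis .
qed

lemma assoc_mult_mat_dims:
  "dim_col A = dim_row B \<Longrightarrow> dim_col B = dim_row C \<Longrightarrow> A * B * C = A * (B * (C :: 'a::semiring_0 mat))"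
  by (rule assoc_mult_mat[of A "dim_row A" "dim_col A" B "dim_col B" C "dim_col C"]) auto

lemma similar_mat_witE:
  assumes "similar_mat_wit A B P Q" "A \<in> carrier_mat n n"
  obtains "B \<in> carrier_mat n n" "P \<in> carrier_mat n n" "Q \<in> carrier_mat n n"
    "P * Q = 1\<^sub>m n" "Q * P = 1\<^sub>m n" "A = P * B * Q"
  using similar_mat_witD2[OF assms(2,1)] by blast

lemma similar_mat_wit_carrier:
  assumes "similar_mat_wit A B P Q" "B \<in> carrier_mat n n"
  shows "A \<in> carrier_mat n n"
  using similar_mat_witD2[OF assms(2) similar_mat_wit_sym[OF assms(1)]] by simp

lemma similar_mat_wit_mult:
  fixes A :: "'a::comm_ring_1 mat"
  assumes AB: "similar_mat_wit A B P Q" and AB': "similar_mat_wit A' B' P Q"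
    and A: "A \<in> carrier_mat n n" and A': "A' \<in> carrier_mat n n"
  shows "similar_mat_wit (A * A') (B * B') P Q"
proof -
  from AB A obtain B: "B \<in> carrier_mat n n" and P: "P \<in> carrier_mat n n"
    and Q: "Q \<in> carrier_mat n n" and PQ: "P * Q = 1\<^sub>m n" and QP: "Q * P = 1\<^sub>m n"
    and eq: "A = P * B * Q" by (rule similar_mat_witE)
  from AB' A' obtain B': "B' \<in> carrier_mat n n" and eq': "A' = P * B' * Q"
    by (rule similar_mat_witE)
  have "A * A' = P * (B * B') * Q"
    unfolding eq eq' using B B' P Q
    by (simp add: assoc_mult_mat[of _ n n _ n _ n] mult_mat_cancel_left[OF QP])
  with B B' P Q PQ QP show ?thesis
    by (intro similar_mat_witI) auto
qed

lemma similar_mat_wit_add: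
  fixes A :: "'a::comm_ring_1 mat"
  assumes AB: "similar_mat_wit A B P Q" and AB': "similar_mat_wit A' B' P Q"
    and A: "A \<in> carrier_mat n n" and A': "A' \<in> carrier_mat n n"
  shows "similar_mat_wit (A + A') (B + B') P Q"
proof -
  from AB A obtain B: "B \<in> carrier_mat n n" and P: "P \<in> carrier_mat n n"
    and Q: "Q \<in> carrier_mat n n" and PQ: "P * Q = 1\<^sub>m n" and QP: "Q * P = 1\<^sub>m n"
    and eq: "A = P * B * Q" by (rule similar_mat_witE)
  from AB' A' obtain B': "B' \<in> carrier_mat n n" and eq': "A' = P * B' * Q"
    by (rule similar_mat_witE)
  have "A + A' = P * (B + B') * Q"
    unfolding eq eq' using B B' P Q
    by (simp add: mult_add_distrib_mat[of P n n B n B'] add_mult_distrib_mat[of _ n n _ Q n])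
  with B B' P Q PQ QP show ?thesis
    by (intro similar_mat_witI) auto
qed

lemma similar_mat_wit_minus:
  fixes A :: "'a::comm_ring_1 mat"
  assumes AB: "similar_mat_wit A B P Q" and AB': "similar_mat_wit A' B' P Q"
    and A: "A \<in> carrier_mat n n" and A': "A' \<in> carrier_mat n n"
  shows "similar_mat_wit (A - A') (B - B') P Q"
proof -
  from AB A obtain B: "B \<in> carrier_mat n n" and P: "P \<in> carrier_mat n n"
    and Q: "Q \<in> carrier_mat n n" and PQ: "P * Q = 1\<^sub>m n" and QP: "Q * P = 1\<^sub>m n"
    and eq: "A = P * B * Q" by (rule similar_mat_witE)
  from AB' A' obtain B': "B' \<in> carrier_mat n n" and eq': "A' = P * B' * Q"
    by (rule similar_mat_witE)
  have "A - A' = P * (B - B') * Q"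
    unfolding eq eq' using B B' P Q
    by (simp add: mult_minus_distrib_mat[of P n n B n B'] minus_mult_distrib_mat[of _ n n _ Q n])
  with B B' P Q PQ QP show ?thesis
    by (intro similar_mat_witI) auto
qed

lemma similar_mat_wit_one:
  assumes "similar_mat_wit A B P Q" "A \<in> carrier_mat n n"
  shows "similar_mat_wit (1\<^sub>m n) (1\<^sub>m n) P Q"
proof -
  from assms obtain P: "P \<in> carrier_mat n n" and Q: "Q \<in> carrier_mat n n"
    and PQ: "P * Q = 1\<^sub>m n" and QP: "Q * P = 1\<^sub>m n" by (rule similar_mat_witE)
  then show ?thesis
    by (intro similar_mat_witI) auto
qed

lemma similar_mat_wit_commutator:
  fixes A :: "'a::comm_ring_1 mat"
  assumes "similar_mat_wit A B P Q" "similar_mat_wit A' B' P Q"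
    and "A \<in> carrier_mat n n" "A' \<in> carrier_mat n n"
  shows "similar_mat_wit (A * A' - A' * A - 1\<^sub>m n) (B * B' - B' * B - 1\<^sub>m n) P Q"
  using similar_mat_wit_one[OF assms(1,3)] assms
  by (auto intro!: similar_mat_wit_minus similar_mat_wit_mult)

lemma similar_mat_wit_conj:
  assumes "similar_mat_wit A B P Q" "A \<in> carrier_mat n n" "C \<in> carrier_mat n n"
  shows "similar_mat_wit (P * C * Q) C P Q"
  using assms by (auto elim!: similar_mat_witE intro!: similar_mat_witI[of P Q n])

lemma sim_conj_iff_similar_mat_wit:
  assumes A: "A \<in> carrier_mat n n" and B: "B \<in> carrier_mat n n"
  shows "sim_conj n (A, B) (X, Y) \<longleftrightarrow> (\<exists>P Q. similar_mat_wit X A P Q \<and> similar_mat_wit Y B P Q)"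
proof
  assume "sim_conj n (A, B) (X, Y)"
  then obtain P Q where "P \<in> carrier_mat n n" "Q \<in> carrier_mat n n" "P * Q = 1\<^sub>m n" "Q * P = 1\<^sub>m n"
    "X = P * A * Q" "Y = P * B * Q"
    unfolding sim_conj_def by auto
  with A B have "similar_mat_wit X A P Q" "similar_mat_wit Y B P Q"
    by (auto intro!: similar_mat_witI[of P Q n])
  then show "\<exists>P Q. similar_mat_wit X A P Q \<and> similar_mat_wit Y B P Q"
    by blast
next
  assume "\<exists>P Q. similar_mat_wit X A P Q \<and> similar_mat_wit Y B P Q"
  then obtain P Q where XA: "similar_mat_wit X A P Q" and YB: "similar_mat_wit Y B P Q"
    by blast
  from XA similar_mat_wit_carrier[OF XA A] obtain "P \<in> carrier_mat n n" "Q \<in> carrier_mat n n"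
    "P * Q = 1\<^sub>m n" "Q * P = 1\<^sub>m n" "X = P * A * Q"
    by (rule similar_mat_witE)
  moreover from YB similar_mat_wit_carrier[OF YB B] have "Y = P * B * Q"
    by (rule similar_mat_witE)
  ultimately show "sim_conj n (A, B) (X, Y)"
    unfolding sim_conj_def by auto
qed

lemma simultaneous_similarity_transfer:
  assumes XD: "similar_mat_wit X D P Q" and YY': "similar_mat_wit Y Y' P Q"
  shows "(\<exists>R S. similar_mat_wit X A R S \<and> similar_mat_wit Y B R S)
    \<longleftrightarrow> (\<exists>R S. similar_mat_wit D A R S \<and> similar_mat_wit Y' B R S)"
proof
  assume "\<exists>R S. similar_mat_wit X A R S \<and> similar_mat_wit Y B R S"
  then obtain R S where "similar_mat_wit X A R S" "similar_mat_wit Y B R S" by blast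
  then have "similar_mat_wit D A (Q * R) (S * P)" "similar_mat_wit Y' B (Q * R) (S * P)"
    using similar_mat_wit_sym[OF XD] similar_mat_wit_sym[OF YY'] by (auto intro: similar_mat_wit_trans)
  then show "\<exists>R S. similar_mat_wit D A R S \<and> similar_mat_wit Y' B R S" by blast
next
  assume "\<exists>R S. similar_mat_wit D A R S \<and> similar_mat_wit Y' B R S"
  then obtain R S where "similar_mat_wit D A R S" "similar_mat_wit Y' B R S" by blast
  then have "similar_mat_wit X A (P * R) (S * Q)" "similar_mat_wit Y B (P * R) (S * Q)"
    using XD YY' by (auto intro: similar_mat_wit_trans)
  then show "\<exists>R S. similar_mat_wit X A R S \<and> similar_mat_wit Y B R S" by blast
qed

section \<open>Diagonal matrices and rank one commutators\<close>

lemma mat_diag_dims [simp]: "dim_row (mat_diag n f) = n" "dim_col (mat_diag n f) = n"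
  by (simp_all add: mat_diag_def)

lemma mat_diag_index [simp]: "i < n \<Longrightarrow> j < n \<Longrightarrow> mat_diag n f $$ (i,j) = (if i = j then f i else 0)"
  by (simp add: mat_diag_def)

lemma diagonal_mat_eq_mat_diag:
  assumes "diagonal_mat D" "D \<in> carrier_mat n n"
  shows "D = mat_diag n (\<lambda>i. D $$ (i,i))"
  using assms unfolding diagonal_mat_def by (intro eq_matI) auto

lemma mat_diag_mult_mat_diag_index:
  fixes B :: "'a::comm_semiring_1 mat"
  assumes "B \<in> carrier_mat n n" "i < n" "j < n"
  shows "(mat_diag n p * B * mat_diag n q) $$ (i,j) = p i * B $$ (i,j) * q j"
  using assms by (simp add: mat_diag_mult_left[of B n n] mat_diag_mult_right[of _ n n])

lemma mat_diag_commutator_index: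
  fixes A :: "'a::comm_ring_1 mat"
  assumes "A \<in> carrier_mat n n" "i < n" "j < n"
  shows "(mat_diag n x * A - A * mat_diag n x - 1\<^sub>m n) $$ (i,j)
    = (x i - x j) * A $$ (i,j) - (if i = j then 1 else 0)"
  using assms by (simp add: mat_diag_mult_left[of A n n] mat_diag_mult_right[of A n n] algebra_simps)

lemma commute_mat_diag_imp_mat_diag:
  fixes A :: "'a::idom mat"
  assumes A: "A \<in> carrier_mat n n" and x: "inj_on x {..<n}"
    and comm: "A * mat_diag n x = mat_diag n x * A"
  shows "A = mat_diag n (\<lambda>i. A $$ (i,i))"
proof (rule eq_matI)
  fix i j assume "i < dim_row (mat_diag n (\<lambda>i. A $$ (i,i)))" "j < dim_col (mat_diag n (\<lambda>i. A $$ (i,i)))"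
  then have ij: "i < n" "j < n" by simp_all
  have "A $$ (i,j) * x j = x i * A $$ (i,j)"
    using arg_cong[OF comm, of "\<lambda>M. M $$ (i,j)"] A ij
    by (simp add: mat_diag_mult_left[of A n n] mat_diag_mult_right[of A n n])
  moreover have "x i \<noteq> x j" if "i \<noteq> j"
    using x ij that by (auto dest: inj_onD)
  ultimately show "A $$ (i,j) = mat_diag n (\<lambda>i. A $$ (i,i)) $$ (i,j)"
    using ij by (auto simp: mult.commute)
qed (use A in simp_all)

lemma similar_mat_wit_fixing_mat_diag_diagonal:
  fixes A B :: "'a::field mat"
  assumes x: "inj_on x {..<n}" and D: "similar_mat_wit (mat_diag n x) (mat_diag n x) P Q"
    and AB: "similar_mat_wit A B P Q" and B: "B \<in> carrier_mat n n" and i: "i < n"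
  shows "A $$ (i,i) = B $$ (i,i)"
proof -
  let ?D = "mat_diag n x"
  from D obtain P: "P \<in> carrier_mat n n" and Q: "Q \<in> carrier_mat n n"
    and PQ: "P * Q = 1\<^sub>m n" and QP: "Q * P = 1\<^sub>m n" and DPQ: "?D = P * ?D * Q"
    by (rule similar_mat_witE[OF _ mat_diag_dim])
  from AB similar_mat_wit_carrier[OF AB B] have A: "A = P * B * Q"
    by (rule similar_mat_witE)
  have "?D * P = P * ?D"
    using P Q by (subst DPQ) (simp add: assoc_mult_mat_dims QP)
  then have P_diag: "P = mat_diag n (\<lambda>i. P $$ (i,i))"
    using commute_mat_diag_imp_mat_diag[OF P x] by simp
  have "Q * ?D = ?D * Q"
    using P Q by (subst (1) DPQ) (simp add: assoc_mult_mat_dims mult_mat_cancel_left[OF QP])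
  then have Q_diag: "Q = mat_diag n (\<lambda>i. Q $$ (i,i))"
    using commute_mat_diag_imp_mat_diag[OF Q x] by simp
  have "P $$ (i,i) * Q $$ (i,i) = 1"
    using arg_cong[OF PQ, of "\<lambda>M. M $$ (i,i)"] i by (subst (asm) P_diag, subst (asm) Q_diag) simp
  then show ?thesis
    using B i by (simp add: A, subst P_diag, subst Q_diag)
      (simp add: mat_diag_mult_mat_diag_index ac_simps del: index_mult_mat)
qed

lemma similar_mat_wit_mat_diag_rescale:
  fixes A :: "'a::field mat"
  assumes A: "A \<in> carrier_mat n n" and k: "\<forall>i<n. k i \<noteq> 0"
  shows "similar_mat_wit A (mat_diag n k * A * mat_diag n (\<lambda>i. inverse (k i)))
    (mat_diag n (\<lambda>i. inverse (k i))) (mat_diag n k)"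
proof (rule similar_mat_witI)
  have inv: "mat_diag n (\<lambda>i. inverse (k i)) * mat_diag n k = 1\<^sub>m n"
    "mat_diag n k * mat_diag n (\<lambda>i. inverse (k i)) = 1\<^sub>m n"
    using k by (auto intro!: eq_matI)
  then show "mat_diag n (\<lambda>i. inverse (k i)) * mat_diag n k = 1\<^sub>m n"
    "mat_diag n k * mat_diag n (\<lambda>i. inverse (k i)) = 1\<^sub>m n" .
  show "A = mat_diag n (\<lambda>i. inverse (k i)) * (mat_diag n k * A * mat_diag n (\<lambda>i. inverse (k i)))
    * mat_diag n k"
  proof -
    have "mat_diag n (\<lambda>i. inverse (k i)) * (mat_diag n k * A * mat_diag n (\<lambda>i. inverse (k i)))
        * mat_diag n k
      = (mat_diag n (\<lambda>i. inverse (k i)) * mat_diag n k) * A * (mat_diag n (\<lambda>i. inverse (k i)) * mat_diag n k)"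
      using A by (simp add: assoc_mult_mat_dims del: mat_diag_diag)
    then show ?thesis
      using A unfolding inv(1) by simp
  qed
qed (use A in auto)

lemma mat_diag_commutator_outer_mat_index:
  fixes Y :: "'a::comm_ring_1 mat"
  assumes "Y \<in> carrier_mat n n"
    and "mat_diag n x * Y - Y * mat_diag n x - 1\<^sub>m n = outer_mat n a b"
    and "i < n" "j < n"
  shows "(x i - x j) * Y $$ (i,j) - (if i = j then 1 else 0) = a i * b j"
  using mat_diag_commutator_index[OF assms(1,3,4), of x] assms by simp

lemma mat_diag_commutator_outer_mat_inj:
  fixes Y :: "'a::idom mat"
  assumes "Y \<in> carrier_mat n n"
    and "mat_diag n x * Y - Y * mat_diag n x - 1\<^sub>m n = outer_mat n a b"
  shows "inj_on x {..<n}"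
proof (rule inj_onI, rule ccontr)
  fix i j assume i: "i \<in> {..<n}" and j: "j \<in> {..<n}" and "x i = x j" "i \<noteq> j"
  then have "a i * b j = 0"
    using mat_diag_commutator_outer_mat_index[OF assms, of i j] by simp
  moreover have "a i * b i = -1" "a j * b j = -1"
    using mat_diag_commutator_outer_mat_index[OF assms, of i i]
      mat_diag_commutator_outer_mat_index[OF assms, of j j] i j by simp_all
  ultimately show False by auto
qed

lemma mat_diag_commutator_outer_mat_gauge:
  fixes Y Y' :: "'a::field mat"
  assumes Y: "Y \<in> carrier_mat n n" and Y': "Y' \<in> carrier_mat n n"
    and comm: "mat_diag n x * Y - Y * mat_diag n x - 1\<^sub>m n = outer_mat n a b"
    and comm': "mat_diag n x * Y' - Y' * mat_diag n x - 1\<^sub>m n = outer_mat n a' b'"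
  obtains k e where "\<forall>i<n. k i \<noteq> 0"
    "mat_diag n k * Y * mat_diag n (\<lambda>i. inverse (k i)) = Y' - mat_diag n e"
proof -
  note E = mat_diag_commutator_outer_mat_index[OF Y comm]
    and E' = mat_diag_commutator_outer_mat_index[OF Y' comm']
  have x: "inj_on x {..<n}"
    by (rule mat_diag_commutator_outer_mat_inj[OF Y comm])
  have ab: "a i * b i = -1" "a' i * b' i = -1" if "i < n" for i
    using E[OF that that] E'[OF that that] by simp_all
  have a: "a i \<noteq> 0" "a' i \<noteq> 0" if "i < n" for i
    using ab[OF that] by auto
  have b: "b i = - 1 / a i" "b' i = - 1 / a' i" if "i < n" for i
    using ab[OF that] a[OF that] by (simp_all add: field_simps)
  \<comment> \<open>conjugation by \<open>diag k\<close> scales entry \<open>(i, j)\<close> by \<open>k i / k j\<close>,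
    turning \<open>a i b j\<close> into \<open>a' i b' j\<close>\<close>
  define k where "k i = a' i / a i" for i
  define e where "e i = Y' $$ (i,i) - Y $$ (i,i)" for i
  have k: "k i \<noteq> 0" if "i < n" for i
    using a[OF that] by (simp add: k_def)
  have "mat_diag n k * Y * mat_diag n (\<lambda>i. inverse (k i)) = Y' - mat_diag n e"
  proof (rule eq_matI)
    fix i j assume "i < dim_row (Y' - mat_diag n e)" "j < dim_col (Y' - mat_diag n e)"
    then have ij: "i < n" "j < n" using Y' by simp_all
    show "(mat_diag n k * Y * mat_diag n (\<lambda>i. inverse (k i))) $$ (i,j) = (Y' - mat_diag n e) $$ (i,j)"
    proof (cases "i = j")
      case True
      then show ?thesis
        using Y Y' ij k by (simp add: mat_diag_mult_mat_diag_index e_def del: index_mult_mat)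
    next
      case False
      then have "x i - x j \<noteq> 0"
        using x ij by (auto dest: inj_onD)
      moreover have "(x i - x j) * (k i * Y $$ (i,j) * inverse (k j)) = (x i - x j) * Y' $$ (i,j)"
      proof -
        have "(x i - x j) * (k i * Y $$ (i,j) * inverse (k j))
            = k i * ((x i - x j) * Y $$ (i,j)) * inverse (k j)"
          by (simp add: ac_simps)
        also have "\<dots> = k i * (a i * b j) * inverse (k j)"
          using E[OF ij] False by simp
        also have "\<dots> = a' i * b' j"
          using a[OF ij(1)] a[OF ij(2)] unfolding b[OF ij(2)] k_def by (simp add: field_simps)
        also have "\<dots> = (x i - x j) * Y' $$ (i,j)"
          using E'[OF ij] False by simp
        finally show ?thesis .
      qed
      ultimately show ?thesis
        using Y Y' ij False by (simp add: mat_diag_mult_mat_diag_index del: index_mult_mat)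
    qed
  qed (use Y Y' in simp_all)
  with k show ?thesis by (intro that) auto
qed

lemma diagonalizable_rank_one_commutator_reduction:
  fixes X Y :: "complex mat"
  assumes X: "X \<in> carrier_mat n n" and Y: "Y \<in> carrier_mat n n"
    and rank: "vec_space.rank n (X * Y - Y * X - 1\<^sub>m n) \<le> 1" and diag: "diagonalizable X"
  obtains x Y' a b P Q where "Y' \<in> carrier_mat n n"
    "mat_diag n x * Y' - Y' * mat_diag n x - 1\<^sub>m n = outer_mat n a b"
    "similar_mat_wit X (mat_diag n x) P Q" "similar_mat_wit Y Y' P Q"
proof -
  obtain D P Q where D: "diagonal_mat D" and XD: "similar_mat_wit X D P Q"
    using diag unfolding diagonalizable_def similar_mat_def by blast
  from XD X obtain Dc: "D \<in> carrier_mat n n" and P: "P \<in> carrier_mat n n" and Q: "Q \<in> carrier_mat n n"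
    by (rule similar_mat_witE)
  define x where "x i = D $$ (i,i)" for i
  have "mat_diag n x = D"
    unfolding x_def by (rule diagonal_mat_eq_mat_diag[OF D Dc, symmetric])
  with XD have XD: "similar_mat_wit X (mat_diag n x) P Q"
    by simp
  have YY': "similar_mat_wit Y (Q * Y * P) P Q"
    using similar_mat_wit_sym[OF similar_mat_wit_conj[OF similar_mat_wit_sym[OF XD] mat_diag_dim Y]] .
  have Y': "Q * Y * P \<in> carrier_mat n n"
    using P Q Y by (metis mult_carrier_mat)
  obtain a b where "X * Y - Y * X - 1\<^sub>m n = outer_mat n a b"
    using rank_le_one_imp_outer_mat[OF _ rank] X Y
    by (metis minus_carrier_mat mult_carrier_mat one_carrier_mat)
  then have "mat_diag n x * (Q * Y * P) - (Q * Y * P) * mat_diag n x - 1\<^sub>m n = Q * outer_mat n a b * P"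
    using similar_mat_witD(3)[OF refl similar_mat_wit_sym[OF similar_mat_wit_commutator[OF XD YY' X Y]]]
    by simp
  then show ?thesis
    using Y' XD YY' mult_outer_mat_mult[OF Q P] by (intro that) simp_all
qed

section \<open>Polynomials in a matrix\<close>

lemma poly_mat_dims [simp]:
  "dim_row (poly_mat f A) = dim_row A" "dim_col (poly_mat f A) = dim_row A"
proof -
  have "dim_row (foldr (\<lambda>c M. c \<cdot>\<^sub>m 1\<^sub>m (dim_row A) + A * M) cs (0\<^sub>m (dim_row A) (dim_row A)))
      = dim_row A \<and>
    dim_col (foldr (\<lambda>c M. c \<cdot>\<^sub>m 1\<^sub>m (dim_row A) + A * M) cs (0\<^sub>m (dim_row A) (dim_row A)))
      = dim_row A" for cs
    by (induction cs) simp_all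
  then show "dim_row (poly_mat f A) = dim_row A" "dim_col (poly_mat f A) = dim_row A"
    by (simp_all add: poly_mat_def)
qed

lemma poly_mat_carrier [simp]: "A \<in> carrier_mat n n \<Longrightarrow> poly_mat f A \<in> carrier_mat n n"
  by (rule carrier_matI) simp_all

lemma poly_mat_mat_diag: "poly_mat f (mat_diag n x) = mat_diag n (\<lambda>i. poly f (x i))"
proof -
  have "foldr (\<lambda>c M. c \<cdot>\<^sub>m 1\<^sub>m n + mat_diag n x * M) cs (0\<^sub>m n n)
      = mat_diag n (\<lambda>i. horner_sum id (x i) cs)" for cs
    by (induction cs) (auto intro!: eq_matI)
  then show ?thesis
    by (simp add: poly_mat_def poly_def)
qed

lemma similar_mat_wit_poly_mat:
  assumes AB: "similar_mat_wit A B P Q" and A: "A \<in> carrier_mat n n"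
  shows "similar_mat_wit (poly_mat f A) (poly_mat f B) P Q"
proof -
  from AB A obtain B: "B \<in> carrier_mat n n" and P: "P \<in> carrier_mat n n"
    and Q: "Q \<in> carrier_mat n n" and PQ: "P * Q = 1\<^sub>m n" and QP: "Q * P = 1\<^sub>m n"
    by (rule similar_mat_witE)
  have "similar_mat_wit (foldr (\<lambda>c M. c \<cdot>\<^sub>m 1\<^sub>m n + A * M) cs (0\<^sub>m n n))
      (foldr (\<lambda>c M. c \<cdot>\<^sub>m 1\<^sub>m n + B * M) cs (0\<^sub>m n n)) P Q"
    (is "similar_mat_wit (?F A cs) (?F B cs) P Q") for cs
  proof (induction cs)
    case Nil
    show ?case
      using P Q PQ QP by (intro similar_mat_witI) auto
  next
    case (Cons c cs)
    have "?F A cs \<in> carrier_mat n n"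
      using A by (induction cs) auto
    then show ?case
      using A by (auto intro!: similar_mat_wit_add similar_mat_wit_mult AB Cons.IH
          similar_mat_wit_smult similar_mat_wit_one[OF AB A])
  qed
  then show ?thesis
    using A B by (simp add: poly_mat_def)
qed

section \<open>The normal form\<close>

lemma Y0_carrier [simp]: "Y0 n \<in> carrier_mat n n"
  by (simp add: Y0_def)

lemma Y0_dims [simp]: "dim_row (Y0 n) = n" "dim_col (Y0 n) = n"
  by (simp_all add: Y0_def)

lemma X0_dims [simp]: "dim_row (X0 n) = n" "dim_col (X0 n) = n"
  by (simp_all add: X0_def)

lemma Y0_index: "i < n \<Longrightarrow> j < n \<Longrightarrow> Y0 n $$ (i,j) = (if j = Suc i then 1 else 0)"
  by (simp add: Y0_def)

lemma X0_index: "i < n \<Longrightarrow> j < n \<Longrightarrow> X0 n $$ (i,j) = (if i = Suc j then - of_nat i else 0)"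
  by (simp add: X0_def)

lemma mult_Y0_index:
  assumes A: "A \<in> carrier_mat n n" and ij: "i < n" "j < n"
  shows "(A * Y0 n) $$ (i,j) = (if 0 < j then A $$ (i, j - 1) else 0)"
proof -
  have "(A * Y0 n) $$ (i,j) = (\<Sum>l = 0..<n. A $$ (i,l) * (if j = Suc l then 1 else 0))"
    using A ij by (simp add: scalar_prod_def Y0_index)
  also have "\<dots> = (\<Sum>l = 0..<n. if l = j - 1 \<and> 0 < j then A $$ (i,l) else 0)"
    by (rule sum.cong) auto
  also have "\<dots> = (if 0 < j then A $$ (i, j - 1) else 0)"
    using ij by (cases "0 < j") (simp_all add: sum.delta)
  finally show ?thesis .
qed

lemma Y0_mult_index:
  assumes A: "A \<in> carrier_mat n n" and ij: "i < n" "j < n"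
  shows "(Y0 n * A) $$ (i,j) = (if Suc i < n then A $$ (Suc i, j) else 0)"
proof -
  have "(Y0 n * A) $$ (i,j) = (\<Sum>l = 0..<n. (if l = Suc i then 1 else 0) * A $$ (l,j))"
    using A ij by (simp add: scalar_prod_def Y0_index)
  also have "\<dots> = (\<Sum>l = 0..<n. if l = Suc i then A $$ (l,j) else 0)"
    by (rule sum.cong) auto
  also have "\<dots> = (if Suc i < n then A $$ (Suc i, j) else 0)"
    by (simp add: sum.delta)
  finally show ?thesis .
qed

lemma poly_mat_Y0_index:
  assumes "i < n" "j < n"
  shows "poly_mat f (Y0 n) $$ (i,j) = (if i \<le> j then coeff f (j - i) else 0)"
proof -
  let ?F = "\<lambda>cs. foldr (\<lambda>c M. c \<cdot>\<^sub>m 1\<^sub>m n + Y0 n * M) cs (0\<^sub>m n n)"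
  have "dim_row (?F cs) = n \<and> dim_col (?F cs) = n" for cs
    by (induction cs) simp_all
  then have F: "?F cs \<in> carrier_mat n n" for cs
    by (blast intro: carrier_matI)
  have "\<forall>i<n. \<forall>j<n. ?F cs $$ (i,j) = (if i \<le> j then nth_default 0 cs (j - i) else 0)" for cs
  proof (induction cs)
    case (Cons c cs)
    have "?F (c # cs) $$ (i,j) = (if i \<le> j then nth_default 0 (c # cs) (j - i) else 0)"
      if ij: "i < n" "j < n" for i j
    proof -
      have shift: "j - Suc i = k" if "j - i = Suc k" for k
        using that by arith
      have "?F (c # cs) $$ (i,j)
          = (if i = j then c else 0) + (if Suc i < n then ?F cs $$ (Suc i, j) else 0)"
        using ij F[of cs] by (simp add: Y0_mult_index del: index_mult_mat(1))
      also have "\<dots> = (if i \<le> j then nth_default 0 (c # cs) (j - i) else 0)"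
        using ij Cons by (auto simp: nth_default_Cons split: nat.split dest: shift)
      finally show ?thesis .
    qed
    then show ?case by simp
  qed simp
  then show ?thesis
    using assms by (simp add: poly_mat_def nth_default_coeffs_eq)
qed

definition normal_X :: "nat \<Rightarrow> complex poly \<Rightarrow> complex mat" where
  "normal_X n p = X0 n + poly_mat (pderiv p) (Y0 n)"

definition normal_Y :: "nat \<Rightarrow> complex poly \<Rightarrow> complex poly \<Rightarrow> complex mat" where
  "normal_Y n p q = Y0 n - poly_mat (pderiv q) (normal_X n p)"

lemma Psi_Phi_X0_Y0: "Psi q (Phi p (X0 n, Y0 n)) = (normal_X n p, normal_Y n p q)"
  by (simp add: Psi_def Phi_def normal_X_def normal_Y_def)

lemma normal_X_dims [simp]: "dim_row (normal_X n p) = n" "dim_col (normal_X n p) = n"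
  by (simp_all add: normal_X_def)

lemma normal_X_carrier [simp]: "normal_X n p \<in> carrier_mat n n"
  by (rule carrier_matI) simp_all

lemma normal_Y_dims [simp]: "dim_row (normal_Y n p q) = n" "dim_col (normal_Y n p q) = n"
  by (simp_all add: normal_Y_def)

lemma normal_Y_carrier [simp]: "normal_Y n p q \<in> carrier_mat n n"
  by (rule carrier_matI) simp_all

lemma normal_X_index:
  "i < n \<Longrightarrow> j < n \<Longrightarrow> normal_X n p $$ (i,j)
    = (if i = Suc j then - of_nat i else 0) + (if i \<le> j then coeff (pderiv p) (j - i) else 0)"
  by (simp add: normal_X_def X0_index poly_mat_Y0_index)

lemma normal_X_commutator:
  "normal_X n p * Y0 n - Y0 n * normal_X n p - 1\<^sub>m n
    = outer_mat n (\<lambda>i. if i = n - 1 then - of_nat n else 0) (\<lambda>j. if j = n - 1 then 1 else 0)"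
  (is "_ = ?O")
proof (rule eq_matI)
  fix i j assume "i < dim_row ?O" "j < dim_col ?O"
  then have ij: "i < n" "j < n" by simp_all
  have "(normal_X n p * Y0 n - Y0 n * normal_X n p - 1\<^sub>m n) $$ (i,j)
    = (if 0 < j then normal_X n p $$ (i, j - 1) else 0)
      - (if Suc i < n then normal_X n p $$ (Suc i, j) else 0) - (if i = j then 1 else 0)"
    using ij by (simp add: mult_Y0_index Y0_mult_index del: index_mult_mat(1))
  also have "\<dots> = (if i = n - 1 \<and> j = n - 1 then - of_nat n else 0)"
    using ij by (auto simp: normal_X_index of_nat_diff)
  finally show "(normal_X n p * Y0 n - Y0 n * normal_X n p - 1\<^sub>m n) $$ (i,j) = ?O $$ (i,j)"
    using ij by simp
qed simp_all

section \<open>Polynomials and formal power series\<close>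

lemma pderiv_inject:
  fixes p q :: "'a::{idom,ring_char_0} poly"
  assumes "pderiv p = pderiv q" "coeff p 0 = coeff q 0"
  shows "p = q"
proof (rule poly_eqI)
  fix k
  have "of_nat (Suc k) * coeff p (Suc k) = of_nat (Suc k) * (coeff q (Suc k) :: 'a)" for k
    using arg_cong[OF assms(1), of "\<lambda>r. coeff r k"] by (simp add: coeff_pderiv del: of_nat_Suc)
  then show "coeff p k = coeff q k"
    using assms(2) by (cases k) (simp_all del: of_nat_Suc)
qed

lemma ex_antiderivative:
  fixes r :: "'a::field_char_0 poly"
  assumes "\<And>k. n \<le> k \<Longrightarrow> coeff r k = 0"
  obtains q where "degree q \<le> n" "coeff q 0 = 0" "pderiv q = r"
proof
  define q where "q = (\<Sum>k<n. monom (coeff r k / of_nat (Suc k)) (Suc k))"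
  show "degree q \<le> n"
    unfolding q_def by (rule degree_sum_le) (auto intro: order.trans[OF degree_monom_le])
  show "coeff q 0 = 0"
    by (simp add: q_def coeff_sum)
  have "coeff q (Suc k) = (if k < n then coeff r k / of_nat (Suc k) else 0)" for k
    by (simp add: q_def coeff_sum)
  then show "pderiv q = r"
    using assms by (intro poly_eqI) (auto simp: coeff_pderiv simp del: of_nat_Suc)
qed

lemma lagrange_interpolation:
  fixes x d :: "nat \<Rightarrow> 'a::field"
  assumes x: "inj_on x {..<n}"
  obtains r where "\<And>k. n \<le> k \<Longrightarrow> coeff r k = 0" "\<And>k. k < n \<Longrightarrow> poly r (x k) = d k"
proof
  define r where "r = (\<Sum>i<n. smult (d i / (\<Prod>j\<in>{..<n}-{i}. x i - x j)) (\<Prod>j\<in>{..<n}-{i}. [:- x j, 1:]))"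
  show "poly r (x k) = d k" if k: "k < n" for k
  proof -
    have "poly r (x k) = (\<Sum>i<n. d i / (\<Prod>j\<in>{..<n}-{i}. x i - x j) * (\<Prod>j\<in>{..<n}-{i}. x k - x j))"
      by (simp add: r_def poly_sum poly_prod)
    also have "\<dots> = (\<Sum>i<n. if i = k then d k else 0)"
    proof (rule sum.cong[OF refl])
      fix i assume i: "i \<in> {..<n}"
      show "d i / (\<Prod>j\<in>{..<n}-{i}. x i - x j) * (\<Prod>j\<in>{..<n}-{i}. x k - x j) = (if i = k then d k else 0)"
      proof (cases "i = k")
        case True
        have "(\<Prod>j\<in>{..<n}-{k}. x k - x j) \<noteq> 0"
          using x k by (auto simp: inj_on_def)
        with True show ?thesis by simp
      next
        case False
        then have "(\<Prod>j\<in>{..<n}-{i}. x k - x j) = 0"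
          using k by (intro prod_zero) auto
        with False show ?thesis by simp
      qed
    qed
    also have "\<dots> = d k"
      using k by simp
    finally show ?thesis .
  qed
  have "degree r \<le> n - 1"
    unfolding r_def
  proof (rule degree_sum_le)
    fix i assume i: "i \<in> {..<n}"
    have "degree (\<Prod>j\<in>{..<n}-{i}. [:- x j, 1:]) \<le> (\<Sum>j\<in>{..<n}-{i}. degree [:- x j, 1:])"
      using degree_prod_sum_le[of "{..<n}-{i}" "\<lambda>j. [:- x j, 1:]"] by (simp add: o_def)
    also have "\<dots> = n - 1"
      using i by simp
    finally show "degree (smult (d i / (\<Prod>j\<in>{..<n}-{i}. x i - x j))
        (\<Prod>j\<in>{..<n}-{i}. [:- x j, 1:])) \<le> n - 1"
      using degree_smult_le order.trans by blast
  qed simp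
  then show "coeff r k = 0" if "n \<le> k" for k
    using that by (cases "n = 0") (simp_all add: r_def coeff_eq_0)
qed

lemma triangular_poly_family_independent:
  fixes f :: "nat \<Rightarrow> 'a::idom poly"
  assumes "\<And>j. j < n \<Longrightarrow> degree (f j) = j" "\<And>j. j < n \<Longrightarrow> f j \<noteq> 0"
    and "(\<Sum>j<n. smult (c j) (f j)) = 0"
  shows "\<forall>j<n. c j = 0"
  using assms
proof (induction n)
  case (Suc n)
  have "coeff (f j) n = 0" if "j < n" for j
    using Suc.prems(1) that by (intro coeff_eq_0) simp
  then have "coeff (\<Sum>j<n. smult (c j) (f j)) n = 0"
    by (simp add: coeff_sum)
  then have "c n * lead_coeff (f n) = 0"
    using arg_cong[OF Suc.prems(3), of "\<lambda>r. coeff r n"] Suc.prems(1)[of n] by simp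
  then have top: "c n = 0"
    using Suc.prems(2)[of n] by simp
  then have sum: "(\<Sum>j<n. smult (c j) (f j)) = 0"
    using Suc.prems(3) by simp
  have "\<forall>j<n. c j = 0"
    by (rule Suc.IH[OF _ _ sum]) (simp_all add: Suc.prems(1,2))
  with top show ?case
    by (auto simp: less_Suc_eq)
qed simp

lemma fps_deriv_eq_mult_coeffs_iff:
  fixes A B R S :: "'a::field_char_0 fps"
  assumes A: "fps_deriv A = A * R" and B: "fps_deriv B = B * S"
    and AB0: "fps_nth A 0 = fps_nth B 0" and A0: "fps_nth A 0 \<noteq> 0"
  shows "(\<forall>j\<le>m. fps_nth A j = fps_nth B j) \<longleftrightarrow> (\<forall>k<m. fps_nth R k = fps_nth S k)"
proof (induction m)
  case 0
  show ?case using AB0 by simp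
next
  case (Suc m)
  have rec: "of_nat (Suc m) * fps_nth C (Suc m)
      = fps_nth C 0 * fps_nth T m + (\<Sum>i=Suc 0..m. fps_nth C i * fps_nth T (m - i))"
    if "fps_deriv C = C * T" for C T :: "'a fps"
    using arg_cong[OF that, of "\<lambda>F. fps_nth F m"] by (simp add: fps_mult_nth sum.atLeast_Suc_atMost)
  have step: "fps_nth A (Suc m) = fps_nth B (Suc m) \<longleftrightarrow> fps_nth R m = fps_nth S m"
    if low: "\<forall>j\<le>m. fps_nth A j = fps_nth B j" "\<forall>k<m. fps_nth R k = fps_nth S k"
  proof -
    have "(\<Sum>i=Suc 0..m. fps_nth A i * fps_nth R (m - i)) = (\<Sum>i=Suc 0..m. fps_nth B i * fps_nth S (m - i))"
      using low by (intro sum.cong) auto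
    then have diff: "of_nat (Suc m) * (fps_nth A (Suc m) - fps_nth B (Suc m))
        = fps_nth A 0 * (fps_nth R m - fps_nth S m)"
      using rec[OF A] rec[OF B] AB0 by (simp add: algebra_simps)
    have "fps_nth A (Suc m) = fps_nth B (Suc m)
        \<longleftrightarrow> of_nat (Suc m) * (fps_nth A (Suc m) - fps_nth B (Suc m)) = 0"
      by (simp del: of_nat_Suc)
    also have "\<dots> \<longleftrightarrow> fps_nth R m = fps_nth S m"
      unfolding diff using A0 by simp
    finally show ?thesis .
  qed
  show ?case
  proof
    assume "\<forall>j\<le>Suc m. fps_nth A j = fps_nth B j"
    then have low: "\<forall>j\<le>m. fps_nth A j = fps_nth B j" and top: "fps_nth A (Suc m) = fps_nth B (Suc m)"
      by simp_all
    from low Suc.IH have "\<forall>k<m. fps_nth R k = fps_nth S k" by simp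
    with step[OF low this] top show "\<forall>k<Suc m. fps_nth R k = fps_nth S k"
      by (simp add: less_Suc_eq)
  next
    assume "\<forall>k<Suc m. fps_nth R k = fps_nth S k"
    then have low: "\<forall>k<m. fps_nth R k = fps_nth S k" and top: "fps_nth R m = fps_nth S m"
      by simp_all
    from low Suc.IH have "\<forall>j\<le>m. fps_nth A j = fps_nth B j" by simp
    with step[OF this low] top show "\<forall>j\<le>Suc m. fps_nth A j = fps_nth B j"
      by (simp add: le_Suc_eq)
  qed
qed

section \<open>The eigenvalue polynomial\<close>

text \<open>\<open>exp (p z)\<close> is obtained by composition, which is meaningful only when \<open>p(0) = 0\<close>.\<close>
definition exp_poly_fps :: "'a::field_char_0 poly \<Rightarrow> 'a fps" where
  "exp_poly_fps p = fps_exp 1 oo fps_of_poly p"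

definition eigen_fps :: "'a::field_char_0 poly \<Rightarrow> 'a \<Rightarrow> 'a fps" where
  "eigen_fps p l = exp_poly_fps p * fps_exp (- l)"

lemma exp_poly_fps_nth_0: "coeff p 0 = 0 \<Longrightarrow> fps_nth (exp_poly_fps p) 0 = 1"
  by (simp add: exp_poly_fps_def)

lemma fps_deriv_exp_poly_fps:
  "coeff p 0 = 0 \<Longrightarrow> fps_deriv (exp_poly_fps p) = exp_poly_fps p * fps_of_poly (pderiv p)"
  by (simp add: exp_poly_fps_def fps_compose_deriv fps_of_poly_pderiv)

lemma eigen_fps_nth_0: "coeff p 0 = 0 \<Longrightarrow> fps_nth (eigen_fps p l) 0 = 1"
  by (simp add: eigen_fps_def exp_poly_fps_nth_0)

lemma eigen_fps_nth_Suc: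
  assumes "coeff p 0 = 0"
  shows "of_nat (Suc j) * fps_nth (eigen_fps p l) (Suc j)
    = (\<Sum>i\<le>j. fps_nth (eigen_fps p l) i * coeff (pderiv p) (j - i)) - l * fps_nth (eigen_fps p l) j"
proof -
  let ?E = "fps_nth (eigen_fps p l)"
  have "fps_deriv (eigen_fps p l) = eigen_fps p l * (fps_of_poly (pderiv p) - fps_const l)"
    unfolding eigen_fps_def fps_deriv_mult fps_deriv_exp_poly_fps[OF assms] fps_exp_deriv
    by (simp add: algebra_simps fps_const_neg [symmetric] del: fps_const_neg)
  from arg_cong[OF this, of "\<lambda>F. fps_nth F j"]
  have "of_nat (Suc j) * ?E (Suc j) = fps_nth (eigen_fps p l * (fps_of_poly (pderiv p) - fps_const l)) j"
    by simp
  also have "\<dots> = (\<Sum>i=0..j. ?E i * (coeff (pderiv p) (j - i) - (if j - i = 0 then l else 0)))"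
    by (simp add: fps_mult_nth)
  also have "\<dots> = (\<Sum>i=0..j. ?E i * coeff (pderiv p) (j - i)) - (\<Sum>i=0..j. if i = j then ?E i * l else 0)"
    by (subst sum_subtractf[symmetric]) (rule sum.cong, simp_all add: right_diff_distrib)
  finally show ?thesis
    by (simp add: atLeast0AtMost sum.delta' mult.commute)
qed

definition eigen_poly :: "nat \<Rightarrow> 'a::field_char_0 poly \<Rightarrow> 'a poly" where
  "eigen_poly m p = (\<Sum>k\<le>m. monom (fps_nth (exp_poly_fps p) (m - k) * (-1) ^ k / fact k) k)"

lemma poly_eigen_poly: "poly (eigen_poly m p) l = fps_nth (eigen_fps p l) m"
proof -
  have neg: "(- l) ^ k = (-1) ^ k * l ^ k" for k
    by (metis mult_minus1 power_mult_distrib)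
  have "poly (eigen_poly m p) l = (\<Sum>k\<le>m. fps_nth (exp_poly_fps p) (m - k) * (-1) ^ k / fact k * l ^ k)"
    by (simp add: eigen_poly_def poly_sum poly_monom)
  also have "\<dots> = (\<Sum>i=0..m. fps_nth (exp_poly_fps p) i * (-1) ^ (m - i) / fact (m - i) * l ^ (m - i))"
    by (rule sum.reindex_bij_witness[of _ "\<lambda>k. m - k" "\<lambda>k. m - k"]) auto
  also have "\<dots> = (\<Sum>i=0..m. fps_nth (exp_poly_fps p) i * (- l) ^ (m - i) / fact (m - i))"
    by (simp add: neg mult.assoc)
  finally show ?thesis
    by (simp add: eigen_fps_def fps_mult_nth)
qed

lemma coeff_eigen_poly:
  "coeff (eigen_poly m p) k = (if k \<le> m then fps_nth (exp_poly_fps p) (m - k) * (-1) ^ k / fact k else 0)"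
  by (simp add: eigen_poly_def coeff_sum)

lemma degree_eigen_poly: "degree (eigen_poly m p) \<le> m"
  unfolding eigen_poly_def by (rule degree_sum_le) (auto intro: order.trans[OF degree_monom_le])

lemma coeff_eigen_poly_top: "coeff p 0 = 0 \<Longrightarrow> coeff (eigen_poly m p) m = (-1) ^ m / fact m"
  by (simp add: coeff_eigen_poly exp_poly_fps_nth_0)

lemma degree_eigen_poly_eq: "coeff p 0 = 0 \<Longrightarrow> degree (eigen_poly m p) = m"
  using coeff_eigen_poly_top[of p m] degree_eigen_poly[of m p]
  by (intro antisym le_degree) simp_all

lemma eigen_poly_inject:
  fixes p q :: "'a::field_char_0 poly"
  assumes deg: "degree p \<le> n" "degree q \<le> n" and p0: "coeff p 0 = 0" and q0: "coeff q 0 = 0"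
    and eq: "eigen_poly n p = eigen_poly n q"
  shows "p = q"
proof (rule pderiv_inject)
  have "fps_nth (exp_poly_fps p) j = fps_nth (exp_poly_fps q) j" if "j \<le> n" for j
    using arg_cong[OF eq, of "\<lambda>r. coeff r (n - j)"] that by (simp add: coeff_eigen_poly)
  then have "\<forall>k<n. fps_nth (fps_of_poly (pderiv p)) k = fps_nth (fps_of_poly (pderiv q)) k"
    using fps_deriv_eq_mult_coeffs_iff[OF fps_deriv_exp_poly_fps[OF p0] fps_deriv_exp_poly_fps[OF q0], of n]
    by (simp add: exp_poly_fps_nth_0 p0 q0)
  moreover have "coeff (pderiv r) k = 0" if "degree r \<le> n" "n \<le> k" for r :: "'a poly" and k
    using that by (simp add: coeff_pderiv coeff_eq_0)
  ultimately show "pderiv p = pderiv q"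
    using deg by (intro poly_eqI) (metis fps_of_poly_nth not_le)
  show "coeff p 0 = coeff q 0"
    using p0 q0 by simp
qed

lemma eigen_poly_surj:
  fixes T :: "'a::field_char_0 poly"
  assumes deg: "degree T \<le> n" and top: "coeff T n = (-1) ^ n / fact n"
  obtains p where "degree p \<le> n" "coeff p 0 = 0" "eigen_poly n p = T"
proof -
  define A where "A = Abs_fps (\<lambda>i. if i \<le> n then coeff T (n - i) * fact (n - i) * (-1) ^ (n - i) else 0)"
  have A0: "fps_nth A 0 = 1"
    using top by (simp add: A_def)
  define R where "R = fps_deriv A * inverse A"
  have "A * inverse A = 1"
    using A0 by (simp add: inverse_mult_eq_1')
  then have AR: "fps_deriv A = A * R"
    by (simp add: R_def mult.left_commute)
  obtain p where p: "degree p \<le> n" "coeff p 0 = 0" "pderiv p = truncate_fps n R"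
    using ex_antiderivative[of n "truncate_fps n R"] by (auto simp: coeff_truncate_fps)
  have "\<forall>j\<le>n. fps_nth (exp_poly_fps p) j = fps_nth A j"
    using fps_deriv_eq_mult_coeffs_iff[OF fps_deriv_exp_poly_fps[OF p(2)] AR]
    by (simp add: exp_poly_fps_nth_0 p(2) A0 p(3) coeff_truncate_fps)
  then have "eigen_poly n p = T"
    using deg by (intro poly_eqI) (auto simp: coeff_eigen_poly A_def coeff_eq_0)
  with p show ?thesis by (intro that)
qed

lemma eigen_poly_eq_prod_roots:
  fixes x :: "nat \<Rightarrow> 'a::field_char_0"
  assumes p0: "coeff p 0 = 0" and x: "inj_on x {..<n}"
    and roots: "\<And>k. k < n \<Longrightarrow> fps_nth (eigen_fps p (x k)) n = 0"
  shows "eigen_poly n p = smult ((-1) ^ n / fact n) (\<Prod>k<n. [:- x k, 1:])"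
proof (rule poly_eqI_degree_lead_coeff[of _ n _ "x ` {..<n}"])
  have "degree (\<Prod>k<n. [:- x k, 1:]) = n"
    by (subst degree_prod_eq_sum_degree) auto
  moreover have "lead_coeff (\<Prod>k<n. [:- x k, 1:]) = 1"
    by (simp add: lead_coeff_prod)
  ultimately show "degree (smult ((-1) ^ n / fact n) (\<Prod>k<n. [:- x k, 1:])) \<le> n"
    "coeff (eigen_poly n p) n = coeff (smult ((-1) ^ n / fact n) (\<Prod>k<n. [:- x k, 1:])) n"
    using p0 by (simp_all add: coeff_eigen_poly_top)
  show "degree (eigen_poly n p) \<le> n"
    by (rule degree_eigen_poly)
  show "n \<le> card (x ` {..<n})"
    using card_image[OF x] by simp
  show "poly (eigen_poly n p) z = poly (smult ((-1) ^ n / fact n) (\<Prod>k<n. [:- x k, 1:])) z"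
    if "z \<in> x ` {..<n}" for z
    using that roots by (auto simp: poly_eigen_poly poly_prod)
qed

section \<open>Eigenvectors of the normal form\<close>

lemma row_mult_normal_X:
  assumes j: "j < n"
  shows "(\<Sum>i<n. w i * normal_X n p $$ (i,j))
    = (if Suc j < n then - of_nat (Suc j) * w (Suc j) else 0) + (\<Sum>i\<le>j. w i * coeff (pderiv p) (j - i))"
proof -
  have "(\<Sum>i<n. w i * normal_X n p $$ (i,j))
      = (\<Sum>i<n. if i = Suc j then - of_nat (Suc j) * w (Suc j) else 0)
        + (\<Sum>i<n. if i \<in> {..j} then w i * coeff (pderiv p) (j - i) else 0)"
    by (subst sum.distrib[symmetric], rule sum.cong) (use j in \<open>auto simp: normal_X_index algebra_simps\<close>)
  also have "(\<Sum>i<n. if i = Suc j then - of_nat (Suc j) * w (Suc j) else 0)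
      = (if Suc j < n then - of_nat (Suc j) * w (Suc j) else 0)"
    by (simp add: sum.delta)
  also have "(\<Sum>i<n. if i \<in> {..j} then w i * coeff (pderiv p) (j - i) else 0)
      = (\<Sum>i\<in>{..<n} \<inter> {..j}. w i * coeff (pderiv p) (j - i))"
    by (rule sum.inter_restrict[symmetric]) simp
  also have "{..<n} \<inter> {..j} = {..j}"
    using j by auto
  finally show ?thesis .
qed

lemma eigen_fps_row_mult_normal_X:
  assumes p0: "coeff p 0 = 0" and j: "j < n"
  shows "(\<Sum>i<n. fps_nth (eigen_fps p l) i * normal_X n p $$ (i,j))
    = l * fps_nth (eigen_fps p l) j + (if Suc j = n then of_nat n * fps_nth (eigen_fps p l) n else 0)"
  using eigen_fps_nth_Suc[OF p0, of j l] j
  by (auto simp: row_mult_normal_X algebra_simps simp del: of_nat_Suc)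

lemma left_eigenvector_normal_X_root:
  assumes p0: "coeff p 0 = 0"
    and eig: "\<And>j. j < n \<Longrightarrow> (\<Sum>i<n. w i * normal_X n p $$ (i,j)) = l * w j"
    and nz: "j0 < n" "w j0 \<noteq> 0"
  shows "fps_nth (eigen_fps p l) n = 0"
proof -
  let ?G = "fps_nth (eigen_fps p l)"
  define c where "c = w 0"
  have conv: "(\<Sum>k\<le>i. w k * coeff (pderiv p) (i - k)) = c * (of_nat (Suc i) * ?G (Suc i) + l * ?G i)"
    if "\<forall>k\<le>i. w k = c * ?G k" for i
    using that eigen_fps_nth_Suc[OF p0, of i l] by (simp add: sum_distrib_left ac_simps)
  \<comment> \<open>the rows \<open>j < n - 1\<close> of \<open>w X = l w\<close> are the recursion of \<open>eigen_fps_nth_Suc\<close>;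
    the last row then forces the \<open>n\<close>-th coefficient to vanish\<close>
  have proportional: "\<forall>k\<le>i. w k = c * ?G k" if "i < n" for i
    using that
  proof (induction i)
    case 0
    then show ?case by (simp add: c_def eigen_fps_nth_0[OF p0])
  next
    case (Suc i)
    then have IH: "\<forall>k\<le>i. w k = c * ?G k" by simp
    have "l * w i = - of_nat (Suc i) * w (Suc i) + c * (of_nat (Suc i) * ?G (Suc i) + l * ?G i)"
      using eig[of i] Suc.prems by (simp add: row_mult_normal_X conv[OF IH])
    then have "of_nat (Suc i) * w (Suc i) = of_nat (Suc i) * (c * ?G (Suc i))"
      using IH by (simp add: algebra_simps)
    then have "w (Suc i) = c * ?G (Suc i)"
      by (simp del: of_nat_Suc)
    with IH show ?case
      by (auto simp: le_Suc_eq)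
  qed
  then have "c \<noteq> 0"
    using nz by auto
  obtain m where n: "n = Suc m"
    using nz(1) by (cases n) auto
  have "l * w m = (\<Sum>k\<le>m. w k * coeff (pderiv p) (m - k))"
    using eig[of m] row_mult_normal_X[of m n w p] n by simp
  also have "\<dots> = c * (of_nat n * ?G n + l * ?G m)"
    using conv[OF proportional[of m]] n by simp
  finally have "c * (of_nat n * ?G n) = 0"
    using proportional[of m] n by (simp add: algebra_simps)
  with \<open>c \<noteq> 0\<close> n show ?thesis
    by (simp del: of_nat_Suc)
qed

definition eigen_mat :: "nat \<Rightarrow> complex poly \<Rightarrow> (nat \<Rightarrow> complex) \<Rightarrow> complex mat" where
  "eigen_mat n p x = mat n n (\<lambda>(k,j). fps_nth (eigen_fps p (x k)) j)"

lemma eigen_mat_carrier [simp]: "eigen_mat n p x \<in> carrier_mat n n"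
  by (simp add: eigen_mat_def)

lemma eigen_mat_dims [simp]: "dim_row (eigen_mat n p x) = n" "dim_col (eigen_mat n p x) = n"
  by (simp_all add: eigen_mat_def)

lemma eigen_mat_mult_normal_X:
  assumes p0: "coeff p 0 = 0" and roots: "\<And>k. k < n \<Longrightarrow> fps_nth (eigen_fps p (x k)) n = 0"
  shows "eigen_mat n p x * normal_X n p = mat_diag n x * eigen_mat n p x"
proof (rule eq_matI)
  fix k j assume "k < dim_row (mat_diag n x * eigen_mat n p x)" "j < dim_col (mat_diag n x * eigen_mat n p x)"
  then have kj: "k < n" "j < n" by (simp_all add: eigen_mat_def)
  have "(eigen_mat n p x * normal_X n p) $$ (k,j) = (\<Sum>i<n. fps_nth (eigen_fps p (x k)) i * normal_X n p $$ (i,j))"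
    using kj by (simp add: eigen_mat_def scalar_prod_def atLeast0LessThan)
  also have "\<dots> = x k * fps_nth (eigen_fps p (x k)) j"
    using eigen_fps_row_mult_normal_X[OF p0 kj(2), of "x k"] roots[OF kj(1)] by simp
  also have "\<dots> = (mat_diag n x * eigen_mat n p x) $$ (k,j)"
    using kj by (simp add: mat_diag_mult_left[of _ n n] eigen_mat_def)
  finally show "(eigen_mat n p x * normal_X n p) $$ (k,j) = (mat_diag n x * eigen_mat n p x) $$ (k,j)" .
qed (simp_all add: eigen_mat_def)

lemma det_eigen_mat_nonzero:
  assumes p0: "coeff p 0 = 0" and x: "inj_on x {..<n}"
  shows "det (eigen_mat n p x) \<noteq> 0"
proof
  assume "det (eigen_mat n p x) = 0"
  then obtain v where v: "v \<in> carrier_vec n" "v \<noteq> 0\<^sub>v n" "eigen_mat n p x *\<^sub>v v = 0\<^sub>v n"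
    using det_0_iff_vec_prod_zero[OF eigen_mat_carrier] by blast
  \<comment> \<open>a kernel vector gives a polynomial of degree below \<open>n\<close> vanishing at \<open>n\<close> distinct points\<close>
  define R where "R = (\<Sum>j<n. smult (v $ j) (eigen_poly j p))"
  have roots: "poly R (x k) = 0" if "k < n" for k
  proof -
    have "poly R (x k) = (eigen_mat n p x *\<^sub>v v) $ k"
      using that v(1) by (simp add: R_def poly_sum poly_eigen_poly eigen_mat_def scalar_prod_def
          atLeast0LessThan mult.commute)
    with v(3) that show ?thesis by simp
  qed
  have "R = 0"
  proof (cases "n = 0")
    case False
    have "degree R \<le> n - 1"
      unfolding R_def by (rule degree_sum_le) (auto intro: order.trans[OF degree_smult_le]
          order.trans[OF degree_eigen_poly])
    with False have "degree R < card (x ` {..<n})"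
      using card_image[OF x] by simp
    then show ?thesis
      using roots by (intro poly_eqI_degree[of "x ` {..<n}"]) auto
  qed (simp add: R_def)
  have "eigen_poly j p \<noteq> 0" for j
    using coeff_eigen_poly_top[OF p0, of j] by auto
  then have "\<forall>j<n. v $ j = 0"
    using triangular_poly_family_independent[OF _ _ \<open>R = 0\<close>[unfolded R_def]]
    by (simp add: degree_eigen_poly_eq[OF p0])
  with v(1,2) show False
    by (auto intro!: eq_vecI)
qed

lemma normal_X_diagonalization:
  assumes p0: "coeff p 0 = 0" and x: "inj_on x {..<n}"
    and roots: "\<And>k. k < n \<Longrightarrow> fps_nth (eigen_fps p (x k)) n = 0"
  obtains W W' where "similar_mat_wit (mat_diag n x) (normal_X n p) W W'"
proof -
  let ?W = "eigen_mat n p x"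
  have "?W \<in> Units (ring_mat TYPE(complex) n ())"
    by (rule det_non_zero_imp_unit[OF eigen_mat_carrier det_eigen_mat_nonzero[OF p0 x]])
  then obtain W' where W': "W' \<in> carrier_mat n n" "?W * W' = 1\<^sub>m n" "W' * ?W = 1\<^sub>m n"
    unfolding Units_def by (auto simp: ring_mat_simps)
  have "mat_diag n x = mat_diag n x * ?W * W'"
    using W' by (simp add: assoc_mult_mat_dims)
  also have "\<dots> = ?W * normal_X n p * W'"
    by (simp add: eigen_mat_mult_normal_X[OF p0 roots])
  finally have "similar_mat_wit (mat_diag n x) (normal_X n p) ?W W'"
    using W' by (intro similar_mat_witI) auto
  then show ?thesis by (rule that)
qed

lemma similar_mat_diag_normal_X_imp_root:
  assumes sim: "similar_mat_wit (mat_diag n x) (normal_X n p) V V'"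
    and p0: "coeff p 0 = 0" and k: "k < n"
  shows "fps_nth (eigen_fps p (x k)) n = 0"
proof -
  from sim obtain V: "V \<in> carrier_mat n n" and V': "V' \<in> carrier_mat n n"
    and VV': "V * V' = 1\<^sub>m n" and V'V: "V' * V = 1\<^sub>m n" and D: "mat_diag n x = V * normal_X n p * V'"
    by (rule similar_mat_witE[OF _ mat_diag_dim])
  have "V * normal_X n p = mat_diag n x * V"
    unfolding D using V V' by (simp add: assoc_mult_mat_dims V'V)
  have eig: "(\<Sum>i<n. V $$ (k,i) * normal_X n p $$ (i,j)) = x k * V $$ (k,j)" if "j < n" for j
    using arg_cong[OF \<open>V * normal_X n p = mat_diag n x * V\<close>, of "\<lambda>M. M $$ (k,j)"] V k that
    by (simp add: mat_diag_mult_left[OF V] scalar_prod_def atLeast0LessThan)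
  have "\<exists>j<n. V $$ (k,j) \<noteq> 0"
  proof (rule ccontr)
    assume "\<not> ?thesis"
    then have "(V * V') $$ (k,k) = 0"
      using V V' k by (simp add: scalar_prod_def)
    with VV' k show False by simp
  qed
  then obtain j where "j < n" "V $$ (k,j) \<noteq> 0" by blast
  then show ?thesis
    using left_eigenvector_normal_X_root[OF p0 eig] by blast
qed

section \<open>Existence and uniqueness of the normal form\<close>

lemma similar_mat_wit_normal_Y:
  assumes "similar_mat_wit (mat_diag n x) (normal_X n p) P Q"
  shows "similar_mat_wit (P * Y0 n * Q - mat_diag n (\<lambda>i. poly (pderiv q) (x i))) (normal_Y n p q) P Q"
proof -
  from assms obtain "P \<in> carrier_mat n n" "Q \<in> carrier_mat n n"
    by (rule similar_mat_witE[OF _ mat_diag_dim])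
  then have "P * Y0 n * Q \<in> carrier_mat n n"
    by (metis mult_carrier_mat Y0_carrier)
  then show ?thesis
    unfolding normal_Y_def
    by (rule similar_mat_wit_minus[OF similar_mat_wit_conj[OF assms mat_diag_dim Y0_carrier]
          similar_mat_wit_poly_mat[OF assms mat_diag_dim, of "pderiv q", unfolded poly_mat_mat_diag]
          _ mat_diag_dim])
qed

lemma normal_form_exists:
  fixes Y :: "complex mat"
  assumes Y: "Y \<in> carrier_mat n n"
    and comm: "mat_diag n x * Y - Y * mat_diag n x - 1\<^sub>m n = outer_mat n a b"
  obtains p q P Q where "degree p \<le> n" "coeff p 0 = 0" "degree q \<le> n" "coeff q 0 = 0"
    "similar_mat_wit (mat_diag n x) (normal_X n p) P Q" "similar_mat_wit Y (normal_Y n p q) P Q"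
proof -
  let ?D = "mat_diag n x"
  have x: "inj_on x {..<n}"
    by (rule mat_diag_commutator_outer_mat_inj[OF Y comm])
  \<comment> \<open>choose \<open>p\<close> such that the \<open>x k\<close> are the eigenvalues of \<open>normal_X n p\<close>\<close>
  define T where "T = smult ((-1) ^ n / fact n) (\<Prod>k<n. [:- x k, 1:])"
  have "degree (\<Prod>k<n. [:- x k, 1:]) = n"
    by (subst degree_prod_eq_sum_degree) auto
  moreover have "lead_coeff (\<Prod>k<n. [:- x k, 1:]) = 1"
    by (simp add: lead_coeff_prod)
  ultimately obtain p where p: "degree p \<le> n" "coeff p 0 = 0" "eigen_poly n p = T"
    using eigen_poly_surj[of T n] by (auto simp: T_def)
  have roots: "fps_nth (eigen_fps p (x k)) n = 0" if "k < n" for k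
  proof -
    have "poly T (x k) = 0"
      using that by (auto simp: T_def poly_prod)
    then show ?thesis
      using p(3) poly_eigen_poly[of n p "x k"] by simp
  qed
  obtain W W' where W: "similar_mat_wit ?D (normal_X n p) W W'"
    using normal_X_diagonalization[OF p(2) x roots] .
  let ?Yh = "W * Y0 n * W'"
  have Yh: "similar_mat_wit ?Yh (Y0 n) W W'"
    by (rule similar_mat_wit_conj[OF W mat_diag_dim Y0_carrier])
  from W obtain Wc: "W \<in> carrier_mat n n" "W' \<in> carrier_mat n n"
    by (rule similar_mat_witE[OF _ mat_diag_dim])
  have Yhc: "?Yh \<in> carrier_mat n n"
    using Wc by (metis mult_carrier_mat Y0_carrier)
  then have "?D * ?Yh - ?Yh * ?D - 1\<^sub>m n = W * (normal_X n p * Y0 n - Y0 n * normal_X n p - 1\<^sub>m n) * W'"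
    by (rule similar_mat_witD(3)[OF refl similar_mat_wit_commutator[OF W Yh mat_diag_dim], simplified])
  then obtain a' b' where "?D * ?Yh - ?Yh * ?D - 1\<^sub>m n = outer_mat n a' b'"
    unfolding normal_X_commutator mult_outer_mat_mult[OF Wc] by blast
  then obtain k e where k: "\<forall>i<n. k i \<noteq> 0"
    and gauge: "mat_diag n k * Y * mat_diag n (\<lambda>i. inverse (k i)) = ?Yh - mat_diag n e"
    by (rule mat_diag_commutator_outer_mat_gauge[OF Y Yhc comm])
  obtain r where r: "\<And>k. n \<le> k \<Longrightarrow> coeff r k = 0" "\<And>k. k < n \<Longrightarrow> poly r (x k) = e k"
    using lagrange_interpolation[OF x] by blast
  obtain q where q: "degree q \<le> n" "coeff q 0 = 0" "pderiv q = r"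
    using ex_antiderivative[OF r(1)] by blast
  have "mat_diag n (\<lambda>i. poly (pderiv q) (x i)) = mat_diag n e"
    using r(2) q(3) by (intro eq_matI) simp_all
  then have "similar_mat_wit (mat_diag n k * Y * mat_diag n (\<lambda>i. inverse (k i))) (normal_Y n p q) W W'"
    using similar_mat_wit_normal_Y[OF W, of q] gauge by simp
  moreover have "similar_mat_wit Y (mat_diag n k * Y * mat_diag n (\<lambda>i. inverse (k i)))
      (mat_diag n (\<lambda>i. inverse (k i))) (mat_diag n k)"
    by (rule similar_mat_wit_mat_diag_rescale[OF Y k])
  moreover have "mat_diag n k * ?D * mat_diag n (\<lambda>i. inverse (k i)) = ?D"
    using k by (intro eq_matI) simp_all
  then have "similar_mat_wit ?D ?D (mat_diag n (\<lambda>i. inverse (k i))) (mat_diag n k)"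
    using similar_mat_wit_mat_diag_rescale[OF mat_diag_dim k, of x] by simp
  ultimately show ?thesis
    using p q W
    by (intro that[of p q "mat_diag n (\<lambda>i. inverse (k i)) * W" "W' * mat_diag n k"])
      (auto intro: similar_mat_wit_trans)
qed

lemma normal_Y_unique:
  assumes x: "inj_on x {..<n}"
    and q: "degree q \<le> n" "coeff q 0 = 0" and q': "degree q' \<le> n" "coeff q' 0 = 0"
    and XP: "similar_mat_wit (mat_diag n x) (normal_X n p) P Q"
    and YP: "similar_mat_wit Y (normal_Y n p q) P Q"
    and XP': "similar_mat_wit (mat_diag n x) (normal_X n p) P' Q'"
    and YP': "similar_mat_wit Y (normal_Y n p q') P' Q'"
  shows "q = q'"
proof (rule pderiv_inject)
  let ?D = "mat_diag n x"
  have fix_D: "similar_mat_wit ?D ?D (P * Q') (P' * Q)"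
    using similar_mat_wit_trans[OF XP similar_mat_wit_sym[OF XP']] .
  have "similar_mat_wit (P * Y0 n * Q) (P' * Y0 n * Q') (P * Q') (P' * Q)"
    using similar_mat_wit_trans[OF similar_mat_wit_conj[OF XP mat_diag_dim Y0_carrier]
        similar_mat_wit_sym[OF similar_mat_wit_conj[OF XP' mat_diag_dim Y0_carrier]]] .
  moreover from XP' obtain "P' \<in> carrier_mat n n" "Q' \<in> carrier_mat n n"
    by (rule similar_mat_witE[OF _ mat_diag_dim])
  then have "P' * Y0 n * Q' \<in> carrier_mat n n"
    by (metis mult_carrier_mat Y0_carrier)
  ultimately have Y0_diag: "(P * Y0 n * Q) $$ (k,k) = (P' * Y0 n * Q') $$ (k,k)" if "k < n" for k
    using similar_mat_wit_fixing_mat_diag_diagonal[OF x fix_D _ _ that] by blast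
  have Y: "Y = P * Y0 n * Q - mat_diag n (\<lambda>i. poly (pderiv q) (x i))"
    "Y = P' * Y0 n * Q' - mat_diag n (\<lambda>i. poly (pderiv q') (x i))"
    using similar_mat_witD(3)[OF refl YP] similar_mat_witD(3)[OF refl YP']
      similar_mat_witD(3)[OF refl similar_mat_wit_normal_Y[OF XP, of q]]
      similar_mat_witD(3)[OF refl similar_mat_wit_normal_Y[OF XP', of q']]
    by simp_all
  have at_x: "poly (pderiv q) (x k) = poly (pderiv q') (x k)" if "k < n" for k
    using arg_cong[OF trans[OF Y(1)[symmetric] Y(2)], of "\<lambda>M. M $$ (k,k)"] Y0_diag[OF that] that XP XP'
    by (auto elim!: similar_mat_witE[OF _ mat_diag_dim])
  then show "pderiv q = pderiv q'"
  proof (cases "n = 0")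
    case True
    with q q' have "pderiv q = 0" "pderiv q' = 0"
      by (simp_all add: pderiv_eq_0_iff)
    then show ?thesis by simp
  next
    case False
    have "degree (pderiv r) < card (x ` {..<n})" if "degree r \<le> n" for r :: "complex poly"
      using that False card_image[OF x] degree_pderiv[of r] by simp
    with q q' show ?thesis
      by (intro poly_eqI_degree[of "x ` {..<n}"]) (auto simp: at_x)
  qed
  show "coeff q 0 = coeff q' 0"
    using q q' by simp
qed

lemma normal_form_unique:
  assumes x: "inj_on x {..<n}"
    and p: "degree p \<le> n" "coeff p 0 = 0" and q: "degree q \<le> n" "coeff q 0 = 0"
    and p': "degree p' \<le> n" "coeff p' 0 = 0" and q': "degree q' \<le> n" "coeff q' 0 = 0"
    and XP: "similar_mat_wit (mat_diag n x) (normal_X n p) P Q"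
    and YP: "similar_mat_wit Y (normal_Y n p q) P Q"
    and XP': "similar_mat_wit (mat_diag n x) (normal_X n p') P' Q'"
    and YP': "similar_mat_wit Y (normal_Y n p' q') P' Q'"
  shows "(p, q) = (p', q')"
proof -
  have "eigen_poly n p = eigen_poly n p'"
    using eigen_poly_eq_prod_roots[OF p(2) x similar_mat_diag_normal_X_imp_root[OF XP p(2)]]
      eigen_poly_eq_prod_roots[OF p'(2) x similar_mat_diag_normal_X_imp_root[OF XP' p'(2)]] by simp
  then have "p = p'"
    by (rule eigen_poly_inject[OF p(1) p'(1) p(2) p'(2)])
  moreover from this have "q = q'"
    using normal_Y_unique[OF x q q' XP YP] XP' YP' by simp
  ultimately show ?thesis by simp
qed

theorem lemma10p2:
  fixes n :: nat and X Y :: "complex mat"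
  assumes "X \<in> carrier_mat n n" and "Y \<in> carrier_mat n n"
    and "vec_space.rank n (X * Y - Y * X - 1\<^sub>m n) \<le> 1"
    and "diagonalizable X"
  shows "\<exists>!pq :: complex poly \<times> complex poly.
           degree (fst pq) \<le> n \<and> degree (snd pq) \<le> n \<and>
           poly (fst pq) 0 = 0 \<and> poly (snd pq) 0 = 0 \<and>
           sim_conj n (Psi (snd pq) (Phi (fst pq) (X0 n, Y0 n))) (X, Y)"
proof -
  obtain x Y' a b P Q where Y': "Y' \<in> carrier_mat n n"
    and comm: "mat_diag n x * Y' - Y' * mat_diag n x - 1\<^sub>m n = outer_mat n a b"
    and XD: "similar_mat_wit X (mat_diag n x) P Q" and YY': "similar_mat_wit Y Y' P Q"
    using diagonalizable_rank_one_commutator_reduction[OF assms] .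
  have normal_form_iff: "sim_conj n (Psi q (Phi p (X0 n, Y0 n))) (X, Y) \<longleftrightarrow>
      (\<exists>R S. similar_mat_wit (mat_diag n x) (normal_X n p) R S \<and> similar_mat_wit Y' (normal_Y n p q) R S)"
    for p q
    by (simp add: Psi_Phi_X0_Y0 sim_conj_iff_similar_mat_wit simultaneous_similarity_transfer[OF XD YY'])
  obtain p q R S where "degree p \<le> n" "coeff p 0 = 0" "degree q \<le> n" "coeff q 0 = 0"
    "similar_mat_wit (mat_diag n x) (normal_X n p) R S" "similar_mat_wit Y' (normal_Y n p q) R S"
    using normal_form_exists[OF Y' comm] .
  then show ?thesis
    using normal_form_unique[OF mat_diag_commutator_outer_mat_inj[OF Y' comm]]
    by (intro ex1I[of _ "(p, q)"]) (auto simp: normal_form_iff poly_0_coeff_0)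
qed

end
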